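(* Let $X$ be an infinite h-homogeneous zero-dimensional compact Hausdorff space, let $\upsilon\in\Phi(X)$ and let $\tilde\alpha=\{A_1,\dots,A_m\}$ be a finite partition of $X$ into nonempty clopen sets. Then the relation $<_{\upsilon}$ on $\tilde\alpha$ defined by $A_i<_\upsilon A_j \iff (A_i)_\upsilon\subseteq (A_j)_\upsilon$ is a linear order on $\tilde\alpha$. Moreover, if $A_{i_1}<_\upsilon A_{i_2}<_\upsilon\dots<_\upsilon A_{i_m}$ is this ordering, then for each $k=1,\dots,m$ there is a point $x_k\in A_{i_k}$ with $(A_{i_k})_\upsilon\setminus (A_{i_1}\cup\dots\cup A_{i_{k-1}})^\upsilon=\{x_k\}$ (for $k=1$ the union is empty and the set subtracted is $\emptyset$).
   Context: h-homogeneous: every nonempty clopen subset of $X$ is homeomorphic to $X$. $\Phi(X)$ is the set of maximal chains (maximal families of nonempty closed subsets of $X$ totally ordered by inclusion). For $\upsilon\in\Phi(X)$ and a closed $D\subset X$: if $D\ne\emptyset$, $D_\upsilon=\bigcap\{A\in\upsilon: A\cap D\neq\emptyset\}$ (the least element of $\upsilon$ meeting $D$); and $D^\upsilon=\overline{\bigcup\{A\in\upsilon: A\subset D\}}$ (the largest element of $\upsilon$ contained in $D$ when the root of $\upsilon$ lies in $D$). *)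

theory Defs
  imports "HOL-Analysis.Analysis"
begin

definition h_homogeneous :: "'a topology \<Rightarrow> bool" where
  "h_homogeneous X \<longleftrightarrow>
     (\<forall>C. closedin X C \<and> openin X C \<and> C \<noteq> {} \<longrightarrow> subtopology X C homeomorphic_space X)"

definition closed_chain :: "'a topology \<Rightarrow> 'a set set \<Rightarrow> bool" where
  "closed_chain X c \<longleftrightarrow>
     (\<forall>A\<in>c. closedin X A \<and> A \<noteq> {}) \<and> (\<forall>A\<in>c. \<forall>B\<in>c. A \<subseteq> B \<or> B \<subseteq> A)"

definition max_chains :: "'a topology \<Rightarrow> 'a set set set" where
  "max_chains X = {c. closed_chain X c \<and> (\<forall>d. closed_chain X d \<and> c \<subseteq> d \<longrightarrow> d = c)}"

definition chain_lower :: "'a set set \<Rightarrow> 'a set \<Rightarrow> 'a set" where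
  "chain_lower v D = \<Inter>{A\<in>v. A \<inter> D \<noteq> {}}"

definition chain_upper :: "'a topology \<Rightarrow> 'a set set \<Rightarrow> 'a set \<Rightarrow> 'a set" where
  "chain_upper X v D = X closure_of (\<Union>{A\<in>v. A \<subseteq> D})"

definition chain_rel :: "'a set set \<Rightarrow> 'a set set \<Rightarrow> ('a set \<times> 'a set) set" where
  "chain_rel v \<alpha> = {(A, B). A \<in> \<alpha> \<and> B \<in> \<alpha> \<and> chain_lower v A \<subseteq> chain_lower v B}"

end

theory Submission
  imports Defs
begin

text \<open>
  Fix a maximal chain \<open>v\<close> and a nonempty clopen set \<open>A\<close>, and let \<open>L = A\<^sub>v\<close>.
  Every member of \<open>v\<close> either meets \<open>A\<close>, and then contains \<open>L\<close>, or misses \<open>A\<close>, and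
  then is contained in \<open>L\<close>; by compactness \<open>L\<close> meets \<open>A\<close>.  Let \<open>M\<close> be the closure of
  the union of the members missing \<open>A\<close>.  For every point \<open>x \<in> L - M\<close> the closed set
  \<open>M \<union> {x}\<close> is comparable with every member of \<open>v\<close>, so by maximality it belongs to
  \<open>v\<close>; as it meets \<open>A\<close> it contains \<open>L\<close>, whence \<open>L - M = {x}\<close>.  Since \<open>A\<close> is open,
  this point lies in \<open>A\<close>.  Distinct members of the partition therefore have distinct
  lower sets, which makes \<open><\<^sub>v\<close> a linear order.  For the \<open>k\<close>-th member of the order, every
  chain member not containing its lower set lies in the union \<open>U\<close> of the earlier
  members, so \<open>U\<^sup>v\<close> is squeezed between \<open>M\<close> and the closed set \<open>U\<close>, which misses \<open>x\<close>.

  Only compactness and the T1 property enter.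
\<close>

lemma max_chainsD:
  assumes "v \<in> max_chains X" "E \<in> v"
  shows "closedin X E" "E \<noteq> {}"
  using assms by (auto simp: max_chains_def closed_chain_def)

lemma max_chains_comparable:
  "v \<in> max_chains X \<Longrightarrow> E \<in> v \<Longrightarrow> F \<in> v \<Longrightarrow> E \<subseteq> F \<or> F \<subseteq> E"
  by (auto simp: max_chains_def closed_chain_def)

lemma max_chains_memberI:
  assumes "v \<in> max_chains X" "closedin X D" "D \<noteq> {}" "\<forall>E\<in>v. E \<subseteq> D \<or> D \<subseteq> E"
  shows "D \<in> v"
proof -
  have "closed_chain X (insert D v)"
    using assms by (auto simp: max_chains_def closed_chain_def)
  then show ?thesis
    using assms(1) unfolding max_chains_def by blast
qed

lemma topspace_in_max_chain:
  assumes "v \<in> max_chains X" "topspace X \<noteq> {}"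
  shows "topspace X \<in> v"
  using assms max_chains_memberI[OF assms(1)] max_chainsD[OF assms(1)] closedin_subset by blast

lemma chain_lower_subset: "E \<in> v \<Longrightarrow> E \<inter> A \<noteq> {} \<Longrightarrow> chain_lower v A \<subseteq> E"
  by (auto simp: chain_lower_def)

lemma subset_chain_lower:
  assumes "v \<in> max_chains X" "E \<in> v" "E \<inter> A = {}"
  shows "E \<subseteq> chain_lower v A"
  using assms max_chains_comparable[OF assms(1,2)] by (fastforce simp: chain_lower_def)

lemma chain_lower_total:
  assumes "v \<in> max_chains X"
  shows "chain_lower v A \<subseteq> chain_lower v B \<or> chain_lower v B \<subseteq> chain_lower v A"
proof (rule ccontr)
  assume "\<not> ?thesis"
  then obtain C where C: "C \<in> v" "C \<inter> B \<noteq> {}" "\<not> chain_lower v A \<subseteq> C"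
    and not_sub: "\<not> chain_lower v B \<subseteq> chain_lower v A"
    unfolding chain_lower_def by blast
  then have "C \<subseteq> chain_lower v A"
    using subset_chain_lower[OF assms C(1)] chain_lower_subset by blast
  moreover have "chain_lower v B \<subseteq> C"
    using chain_lower_subset C by blast
  ultimately show False
    using not_sub by blast
qed

lemma closedin_chain_lower:
  assumes v: "v \<in> max_chains X" and "A \<subseteq> topspace X" "A \<noteq> {}"
  shows "closedin X (chain_lower v A)"
proof -
  have "topspace X \<in> {E\<in>v. E \<inter> A \<noteq> {}}"
    using topspace_in_max_chain[OF v] assms(2,3) by blast
  then show ?thesis
    unfolding chain_lower_def using max_chainsD(1)[OF v]
    by (intro closedin_Inter) auto
qed

lemma chain_lower_meets:
  assumes v: "v \<in> max_chains X" and "compact_space X" "closedin X A" "A \<noteq> {}"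
  shows "chain_lower v A \<inter> A \<noteq> {}"
proof -
  let ?\<U> = "{C\<in>v. C \<inter> A \<noteq> {}}"
  have "compactin X A"
    using assms closedin_compact_space by blast
  then have fip: "A \<inter> \<Inter>\<U> \<noteq> {}"
    if "\<forall>C\<in>\<U>. closedin X C" "\<forall>\<F>. finite \<F> \<and> \<F> \<subseteq> \<U> \<longrightarrow> A \<inter> \<Inter>\<F> \<noteq> {}" for \<U>
    using that unfolding compactin_fip by blast
  have "A \<inter> \<Inter>\<F> \<noteq> {}" if "finite \<F>" "\<F> \<subseteq> ?\<U>" for \<F>
  proof (cases "\<F> = {}")
    case False
    have "subset.chain v \<F>"
      using that(2) max_chains_comparable[OF v] by (auto simp: subset_chain_def)
    then have "\<Inter>\<F> \<in> \<F>"
      using Inter_in_chain[OF that(1) False] by blast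
    then show ?thesis
      using that(2) by blast
  qed (use assms(4) in simp)
  then have "A \<inter> \<Inter>?\<U> \<noteq> {}"
    using max_chainsD(1)[OF v] by (intro fip) auto
  then show ?thesis
    by (auto simp: chain_lower_def)
qed

lemma chain_lower_minus_closure_subsingleton:
  assumes v: "v \<in> max_chains X" and t1: "t1_space X" and A: "A \<subseteq> topspace X" "A \<noteq> {}"
    and x: "x \<in> chain_lower v A - X closure_of \<Union>{E\<in>v. E \<inter> A = {}}"
    and y: "y \<in> chain_lower v A - X closure_of \<Union>{E\<in>v. E \<inter> A = {}}"
  shows "x = y"
proof (rule ccontr)
  assume "x \<noteq> y"
  define L where "L = chain_lower v A"
  define M where "M = X closure_of \<Union>{E\<in>v. E \<inter> A = {}}"
  define D where "D = M \<union> {x}"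
  have "closedin X L"
    unfolding L_def by (rule closedin_chain_lower[OF v A])
  then have "x \<in> topspace X"
    using x closedin_subset unfolding L_def by blast
  then have "closedin X {x}"
    using t1 unfolding t1_space_closedin_singleton by blast
  then have closed_D: "closedin X D"
    unfolding D_def M_def by (intro closedin_Un closedin_closure_of)
  have missing_in_M: "\<Union>{E\<in>v. E \<inter> A = {}} \<subseteq> M"
    unfolding M_def using closedin_subset[OF max_chainsD(1)[OF v]]
    by (intro closure_of_subset) blast
  have "\<Union>{E\<in>v. E \<inter> A = {}} \<subseteq> L"
    unfolding L_def using subset_chain_lower[OF v] by blast
  then have "M \<subseteq> L"
    unfolding M_def using \<open>closedin X L\<close> by (rule closure_of_minimal)
  have "E \<subseteq> D \<or> D \<subseteq> E" if "E \<in> v" for E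
  proof (cases "E \<inter> A = {}")
    case True
    then show ?thesis
      using that missing_in_M unfolding D_def by blast
  next
    case False
    then have "L \<subseteq> E"
      unfolding L_def by (rule chain_lower_subset[OF that])
    then show ?thesis
      using \<open>M \<subseteq> L\<close> x unfolding D_def L_def by blast
  qed
  moreover have "D \<noteq> {}"
    unfolding D_def by blast
  ultimately have "D \<in> v"
    using max_chains_memberI[OF v closed_D] by blast
  show False
  proof (cases "D \<inter> A = {}")
    case True
    then have "D \<subseteq> M"
      using \<open>D \<in> v\<close> missing_in_M by blast
    then show False
      using x unfolding D_def M_def by blast
  next
    case False
    then have "L \<subseteq> D"
      unfolding L_def by (rule chain_lower_subset[OF \<open>D \<in> v\<close>])
    then show False
      using y \<open>x \<noteq> y\<close> unfolding D_def L_def M_def by blast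
  qed
qed

lemma chain_lower_clopen_singleton:
  assumes v: "v \<in> max_chains X" and "compact_space X" "t1_space X"
    and A: "closedin X A" "openin X A" "A \<noteq> {}"
  shows "\<exists>x. chain_lower v A \<inter> A = {x} \<and>
    chain_lower v A - X closure_of \<Union>{E\<in>v. \<not> chain_lower v A \<subseteq> E} = {x}"
proof -
  let ?L = "chain_lower v A"
  define M where "M = X closure_of \<Union>{E\<in>v. E \<inter> A = {}}"
  obtain x where x: "x \<in> ?L" "x \<in> A"
    using chain_lower_meets[OF v assms(2) A(1,3)] by blast
  have "\<Union>{E\<in>v. E \<inter> A = {}} \<subseteq> topspace X - A"
    using closedin_subset[OF max_chainsD(1)[OF v]] by blast
  then have "M \<subseteq> topspace X - A"
    unfolding M_def using A(2) by (intro closure_of_minimal) auto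
  with x have x_gap: "x \<in> ?L - M"
    by blast
  have unique: "y = x" if "y \<in> ?L - M" for y
    using chain_lower_minus_closure_subsingleton[OF v assms(3) closedin_subset[OF A(1)] A(3)]
      x_gap that unfolding M_def by blast
  have "{E\<in>v. \<not> ?L \<subseteq> E} = {E\<in>v. E \<inter> A = {}}"
    using chain_lower_subset x by blast
  moreover have "?L \<inter> A = {x}"
    using x unique \<open>M \<subseteq> topspace X - A\<close> by blast
  moreover have "?L - M = {x}"
    using x_gap unique by blast
  ultimately show ?thesis
    unfolding M_def by auto
qed

lemma chain_lower_inj_on_partition:
  assumes v: "v \<in> max_chains X" and "compact_space X" "t1_space X"
    and clopen: "\<forall>A\<in>\<alpha>. A \<noteq> {} \<and> closedin X A \<and> openin X A"
    and disjoint: "\<forall>A\<in>\<alpha>. \<forall>B\<in>\<alpha>. A \<noteq> B \<longrightarrow> A \<inter> B = {}"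
  shows "inj_on (chain_lower v) \<alpha>"
proof (rule inj_onI)
  fix A B
  assume "A \<in> \<alpha>" "B \<in> \<alpha>" and same: "chain_lower v A = chain_lower v B"
  have "closedin X A" "openin X A" "A \<noteq> {}" "closedin X B" "openin X B" "B \<noteq> {}"
    using clopen \<open>A \<in> \<alpha>\<close> \<open>B \<in> \<alpha>\<close> by auto
  obtain x y where "chain_lower v A \<inter> A = {x}"
      "chain_lower v A - X closure_of \<Union>{E\<in>v. \<not> chain_lower v A \<subseteq> E} = {x}"
    and "chain_lower v B \<inter> B = {y}"
      "chain_lower v B - X closure_of \<Union>{E\<in>v. \<not> chain_lower v B \<subseteq> E} = {y}"
    using chain_lower_clopen_singleton[OF v assms(2,3) \<open>closedin X A\<close> \<open>openin X A\<close> \<open>A \<noteq> {}\<close>]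
      chain_lower_clopen_singleton[OF v assms(2,3) \<open>closedin X B\<close> \<open>openin X B\<close> \<open>B \<noteq> {}\<close>]
    by (elim exE conjE)
  then have "x \<in> A \<inter> B"
    using same by auto
  then show "A = B"
    using disjoint \<open>A \<in> \<alpha>\<close> \<open>B \<in> \<alpha>\<close> by blast
qed

lemma linear_order_on_chain_rel:
  assumes "v \<in> max_chains X" "inj_on (chain_lower v) \<alpha>"
  shows "linear_order_on \<alpha> (chain_rel v \<alpha>)"
  unfolding linear_order_on_def partial_order_on_def preorder_on_def
proof (intro conjI)
  show "chain_rel v \<alpha> \<subseteq> \<alpha> \<times> \<alpha>"
    unfolding chain_rel_def by blast
  show "refl_on \<alpha> (chain_rel v \<alpha>)"
    unfolding refl_on_def chain_rel_def by blast
  show "trans (chain_rel v \<alpha>)"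
    unfolding trans_def chain_rel_def by blast
  show "antisym (chain_rel v \<alpha>)"
    using assms(2) unfolding antisym_def chain_rel_def by (blast dest: inj_onD)
  show "total_on \<alpha> (chain_rel v \<alpha>)"
  proof (rule total_onI)
    fix A B
    assume "A \<in> \<alpha>" "B \<in> \<alpha>"
    then show "(A, B) \<in> chain_rel v \<alpha> \<or> (B, A) \<in> chain_rel v \<alpha>"
      using chain_lower_total[OF assms(1), of A B] unfolding chain_rel_def by blast
  qed
qed

lemma chain_lower_minus_chain_upper_singleton:
  assumes v: "v \<in> max_chains X" and "compact_space X" "t1_space X"
    and A: "closedin X A" "openin X A" "A \<noteq> {}"
    and U: "closedin X U" "A \<inter> U = {}"
    and cover: "\<forall>E\<in>v. \<not> chain_lower v A \<subseteq> E \<longrightarrow> E \<subseteq> U"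
  shows "\<exists>x\<in>A. chain_lower v A - chain_upper X v U = {x}"
proof -
  obtain x where x: "chain_lower v A \<inter> A = {x}"
      "chain_lower v A - X closure_of \<Union>{E\<in>v. \<not> chain_lower v A \<subseteq> E} = {x}"
    using chain_lower_clopen_singleton[OF v assms(2,3) A] by blast
  have "X closure_of \<Union>{E\<in>v. \<not> chain_lower v A \<subseteq> E} \<subseteq> chain_upper X v U"
    unfolding chain_upper_def using cover by (intro closure_of_mono) blast
  moreover have "chain_upper X v U \<subseteq> U"
    unfolding chain_upper_def using U(1) by (intro closure_of_minimal) auto
  ultimately show ?thesis
    using x U(2) by blast
qed

lemma chain_member_subset_predecessors:
  assumes v: "v \<in> max_chains X"
    and partition: "\<Union>\<alpha> = topspace X"
    and f: "bij_betw f {..<card \<alpha>} \<alpha>"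
    and ordered: "\<forall>i j. i < j \<and> j < card \<alpha> \<longrightarrow> (f i, f j) \<in> chain_rel v \<alpha>"
    and k: "k < card \<alpha>" and E: "E \<in> v" "\<not> chain_lower v (f k) \<subseteq> E"
  shows "E \<subseteq> \<Union>(f ` {..<k})"
proof
  fix z assume "z \<in> E"
  then have "z \<in> \<Union>(f ` {..<card \<alpha>})"
    using closedin_subset[OF max_chainsD(1)[OF v E(1)]] partition bij_betw_imp_surj_on[OF f]
    by blast
  then obtain j where j: "j < card \<alpha>" "z \<in> f j"
    by blast
  have "\<not> k \<le> j"
  proof
    assume "k \<le> j"
    then have "chain_lower v (f k) \<subseteq> chain_lower v (f j)"
      using ordered j(1) unfolding chain_rel_def by (cases "k = j") auto
    also have "\<dots> \<subseteq> E"
      using j(2) \<open>z \<in> E\<close> by (intro chain_lower_subset[OF E(1)]) blast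
    finally show False
      using E(2) by blast
  qed
  then show "z \<in> \<Union>(f ` {..<k})"
    using j(2) by auto
qed

lemma chain_lower_minus_chain_upper_predecessors:
  assumes v: "v \<in> max_chains X" and "compact_space X" and t1: "t1_space X"
    and clopen: "\<forall>A\<in>\<alpha>. A \<noteq> {} \<and> closedin X A \<and> openin X A"
    and disjoint: "\<forall>A\<in>\<alpha>. \<forall>B\<in>\<alpha>. A \<noteq> B \<longrightarrow> A \<inter> B = {}"
    and partition: "\<Union>\<alpha> = topspace X"
    and f: "bij_betw f {..<card \<alpha>} \<alpha>"
    and ordered: "\<forall>i j. i < j \<and> j < card \<alpha> \<longrightarrow> (f i, f j) \<in> chain_rel v \<alpha>"
    and k: "k < card \<alpha>"
  shows "\<exists>x \<in> f k. chain_lower v (f k) - chain_upper X v (\<Union>(f ` {..<k})) = {x}"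
proof -
  have members: "f i \<in> \<alpha>" if "i \<le> k" for i
    using f k that by (meson bij_betwE lessThan_iff le_less_trans)
  have "f k \<noteq> f i" if "i < k" for i
    using bij_betw_imp_inj_on[OF f] k that by (metis inj_onD lessThan_iff less_trans less_irrefl)
  then have "f k \<inter> f i = {}" if "i < k" for i
    using that members disjoint by (meson less_imp_le order_refl)
  then have "f k \<inter> \<Union>(f ` {..<k}) = {}"
    by blast
  moreover have "closedin X (\<Union>(f ` {..<k}))"
    using members clopen by (intro closedin_Union) auto
  moreover have "\<forall>E\<in>v. \<not> chain_lower v (f k) \<subseteq> E \<longrightarrow> E \<subseteq> \<Union>(f ` {..<k})"
    using chain_member_subset_predecessors[OF v partition f ordered k] by blast
  moreover have "closedin X (f k)" "openin X (f k)" "f k \<noteq> {}"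
    using members[of k] clopen by auto
  ultimately show ?thesis
    by (intro chain_lower_minus_chain_upper_singleton[OF v assms(2) t1])
qed

theorem proposition3p3:
  fixes X :: "'a topology" and v :: "'a set set" and \<alpha> :: "'a set set"
  assumes "infinite (topspace X)"
    and "h_homogeneous X"
    and "X dim_le 0"
    and "compact_space X"
    and "Hausdorff_space X"
    and "v \<in> max_chains X"
    and "finite \<alpha>"
    and "\<forall>A\<in>\<alpha>. A \<noteq> {} \<and> closedin X A \<and> openin X A"
    and "\<forall>A\<in>\<alpha>. \<forall>B\<in>\<alpha>. A \<noteq> B \<longrightarrow> A \<inter> B = {}"
    and "\<Union>\<alpha> = topspace X"
  shows "linear_order_on \<alpha> (chain_rel v \<alpha>)
    \<and> (\<forall>f. bij_betw f {..<card \<alpha>} \<alpha>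
            \<and> (\<forall>i j. i < j \<and> j < card \<alpha> \<longrightarrow> (f i, f j) \<in> chain_rel v \<alpha>)
          \<longrightarrow> (\<forall>k < card \<alpha>. \<exists>x \<in> f k.
                 chain_lower v (f k) - chain_upper X v (\<Union>(f ` {..<k})) = {x}))"
proof (intro conjI)
  have t1: "t1_space X"
    using assms(5) Hausdorff_imp_t1_space by blast
  show "linear_order_on \<alpha> (chain_rel v \<alpha>)"
    using chain_lower_inj_on_partition[OF assms(6,4) t1 assms(8,9)]
    by (rule linear_order_on_chain_rel[OF assms(6)])
  show "\<forall>f. bij_betw f {..<card \<alpha>} \<alpha>
            \<and> (\<forall>i j. i < j \<and> j < card \<alpha> \<longrightarrow> (f i, f j) \<in> chain_rel v \<alpha>)
          \<longrightarrow> (\<forall>k < card \<alpha>. \<exists>x \<in> f k.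
                 chain_lower v (f k) - chain_upper X v (\<Union>(f ` {..<k})) = {x})"
    by (auto intro: chain_lower_minus_chain_upper_predecessors[OF assms(6,4) t1 assms(8,9,10)])
qed

end
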